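(* Consider the setting described in the context, where only the dissipative part of the numerical flux is kept, i.e. the numerical flux is $\Phi_{i+1/2}=-\tfrac12 D_{i+1/2}(u_R-u_L)_{i+1/2}$ (equivalently $f_L=f_R=0$). Let $\mathcal{E}_j=(\Phi_{j+1/2}-\Phi_{j-1/2})/h$. Then, as $h\to 0$ with all derivatives evaluated at $x_j$: (i) if $\kappa_3=\kappa-1$, $$\mathcal{E}_j=\frac{\kappa-1}{32}\left[\frac{\partial D}{\partial x}\frac{\partial^5 u}{\partial x^5}+D(u(x_j))\frac{\partial^6 u}{\partial x^6}\right]h^5+O(h^7);$$ (ii) if $\kappa_3=0$, $$\mathcal{E}_j=-\frac{\kappa-1}{8}\left[\frac{\partial D}{\partial x}\frac{\partial^3 u}{\partial x^3}+D(u(x_j))\frac{\partial^4 u}{\partial x^4}\right]h^3+O(h^5).$$ Here $\partial D/\partial x$ denotes $\frac{d}{dx}D(u(x))$.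
   Context: Let $h>0$ and consider the uniform one-dimensional grid $x_i=ih$, $i\in\mathbb{Z}$. Let $u$ be a smooth ($C^\infty$) real function of $x$ and $u_i=u(x_i)$. Let $D$ be a smooth real function of one variable (dissipation coefficient). Nodal derivative approximations are obtained by successive central differencing: $(u_x)_i=(u_{i+1}-u_{i-1})/(2h)$ and $(u_{xx})_i=((u_x)_{i+1}-(u_x)_{i-1})/(2h)$. At the face $i+1/2$, with $j=i$, $k=i+1$, and parameters $\kappa,\kappa_3\in\mathbb{R}$, the reconstructed states are $u_L=\kappa\frac{u_j+u_k}{2}+(1-\kappa)\left[u_j+\frac h2(u_x)_j\right]+\kappa_3T_j$, $u_R=\kappa\frac{u_j+u_k}{2}+(1-\kappa)\left[u_k-\frac h2(u_x)_k\right]+\kappa_3T_k$, where $T_j=\frac h4\big((u_x)_k-(u_x)_j\big)-\frac{h^2}{4}(u_{xx})_j$ and $T_k=\frac h4\big((u_x)_k-(u_x)_j\big)-\frac{h^2}{4}(u_{xx})_k$; these are denoted $(u_L)_{i+1/2},(u_R)_{i+1/2}$. The face dissipation coefficient is $D_{i+1/2}=\bar D(u_i,u_{i+1})$, where $\bar D$ is a smooth symmetric function of two variables with $\bar D(v,v)=D(v)$ (e.g. $D$ evaluated at an average state). *)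

theory Defs
  imports "HOL-Analysis.Analysis" "HOL-Library.Landau_Symbols"
begin

definition smooth1 :: "(real \<Rightarrow> real) \<Rightarrow> bool" where
  "smooth1 f \<longleftrightarrow> (\<forall>n y. ((deriv ^^ n) f) differentiable (at y))"

definition pdx :: "(real \<times> real \<Rightarrow> real) \<Rightarrow> real \<times> real \<Rightarrow> real" where
  "pdx f = (\<lambda>(a, b). deriv (\<lambda>s. f (s, b)) a)"
definition pdy :: "(real \<times> real \<Rightarrow> real) \<Rightarrow> real \<times> real \<Rightarrow> real" where
  "pdy f = (\<lambda>(a, b). deriv (\<lambda>t. f (a, t)) b)"

fun pds :: "bool list \<Rightarrow> (real \<times> real \<Rightarrow> real) \<Rightarrow> real \<times> real \<Rightarrow> real" where
  "pds [] f = f"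
| "pds (b # w) f = (if b then pdx (pds w f) else pdy (pds w f))"

definition smooth2 :: "(real \<times> real \<Rightarrow> real) \<Rightarrow> bool" where
  "smooth2 f \<longleftrightarrow> (\<forall>w. continuous_on UNIV (pds w f) \<and>
      (\<forall>a b. (\<lambda>s. pds w f (s, b)) differentiable (at a) \<and>
             (\<lambda>t. pds w f (a, t)) differentiable (at b)))"

text \<open>Stencil centred at the node x (playing the role of x_j); node m is x + m h.\<close>
definition nodeval :: "(real \<Rightarrow> real) \<Rightarrow> real \<Rightarrow> real \<Rightarrow> int \<Rightarrow> real" where
  "nodeval u x h m = u (x + of_int m * h)"

definition ux :: "(real \<Rightarrow> real) \<Rightarrow> real \<Rightarrow> real \<Rightarrow> int \<Rightarrow> real" where
  "ux u x h m = (nodeval u x h (m + 1) - nodeval u x h (m - 1)) / (2 * h)"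

definition uxx :: "(real \<Rightarrow> real) \<Rightarrow> real \<Rightarrow> real \<Rightarrow> int \<Rightarrow> real" where
  "uxx u x h m = (ux u x h (m + 1) - ux u x h (m - 1)) / (2 * h)"

text \<open>Face i+1/2 with j = i, k = i+1.\<close>
definition TL :: "(real \<Rightarrow> real) \<Rightarrow> real \<Rightarrow> real \<Rightarrow> int \<Rightarrow> real" where
  "TL u x h i = h / 4 * (ux u x h (i + 1) - ux u x h i) - h\<^sup>2 / 4 * uxx u x h i"
definition TR :: "(real \<Rightarrow> real) \<Rightarrow> real \<Rightarrow> real \<Rightarrow> int \<Rightarrow> real" where
  "TR u x h i = h / 4 * (ux u x h (i + 1) - ux u x h i) - h\<^sup>2 / 4 * uxx u x h (i + 1)"

definition uL :: "real \<Rightarrow> real \<Rightarrow> (real \<Rightarrow> real) \<Rightarrow> real \<Rightarrow> real \<Rightarrow> int \<Rightarrow> real" where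
  "uL \<kappa> \<kappa>3 u x h i =
     \<kappa> * (nodeval u x h i + nodeval u x h (i + 1)) / 2
     + (1 - \<kappa>) * (nodeval u x h i + h / 2 * ux u x h i) + \<kappa>3 * TL u x h i"

definition uR :: "real \<Rightarrow> real \<Rightarrow> (real \<Rightarrow> real) \<Rightarrow> real \<Rightarrow> real \<Rightarrow> int \<Rightarrow> real" where
  "uR \<kappa> \<kappa>3 u x h i =
     \<kappa> * (nodeval u x h i + nodeval u x h (i + 1)) / 2
     + (1 - \<kappa>) * (nodeval u x h (i + 1) - h / 2 * ux u x h (i + 1)) + \<kappa>3 * TR u x h i"

definition Phi :: "(real \<times> real \<Rightarrow> real) \<Rightarrow> real \<Rightarrow> real \<Rightarrow> (real \<Rightarrow> real) \<Rightarrow> real \<Rightarrow> real \<Rightarrow> int \<Rightarrow> real" where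
  "Phi Dbar \<kappa> \<kappa>3 u x h i =
     - 1 / 2 * Dbar (nodeval u x h i, nodeval u x h (i + 1))
       * (uR \<kappa> \<kappa>3 u x h i - uL \<kappa> \<kappa>3 u x h i)"

text \<open>E_j = (Phi_{j+1/2} - Phi_{j-1/2}) / h, with node j at x (index 0).\<close>
definition Err :: "(real \<times> real \<Rightarrow> real) \<Rightarrow> real \<Rightarrow> real \<Rightarrow> (real \<Rightarrow> real) \<Rightarrow> real \<Rightarrow> real \<Rightarrow> real" where
  "Err Dbar \<kappa> \<kappa>3 u x h = (Phi Dbar \<kappa> \<kappa>3 u x h 0 - Phi Dbar \<kappa> \<kappa>3 u x h (-1)) / h"

end

theory Submission
  imports Defs
begin

text \<open>Write \<open>v t = u (x + t)\<close> for the profile seen from the node \<open>x = x\<^sub>j\<close>. Once the central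
  differences are written out, the jump \<open>u\<^sub>R - u\<^sub>L\<close> at the face \<open>j + 1/2\<close> is a fixed seven-point
  stencil \<open>L(h)\<close> applied to \<open>v\<close>, the jump at \<open>j - 1/2\<close> is \<open>-L(-h)\<close>, and by the symmetry of \<open>Dbar\<close>
  the dissipation coefficient there is \<open>Dbar(u(x), u(x - h))\<close>. Hence \<open>E\<^sub>j = -(F(h) + F(-h)) / (2h)\<close>
  with \<open>F(h) = Dbar(u(x), u(x + h)) L(h)\<close>. Taylor expansion gives
  \<open>L(h) = p h^n + q h^(n+1) + r h^(n+2) + O(h^(n+3))\<close> with \<open>n = 5\<close> if \<open>\<kappa>\<^sub>3 = \<kappa> - 1\<close> and \<open>n = 3\<close>
  if \<open>\<kappa>\<^sub>3 = 0\<close>, and \<open>Dbar(u(x), u(x + h)) = D + (D \<circ> u)' h / 2 + O(h^2)\<close> because the derivative of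
  \<open>D(v) = Dbar(v, v)\<close> is twice the partial derivative of \<open>Dbar\<close> on the diagonal. As \<open>n\<close> is odd, the
  terms in \<open>h^n\<close> and \<open>h^(n+2)\<close> cancel in \<open>F(h) + F(-h)\<close>, leaving \<open>2 (D q + (D \<circ> u)' p / 2) h^(n+1)\<close>
  up to \<open>O(h^(n+3))\<close>.\<close>

lemma eventually_nhds0_abs_less_1: "\<forall>\<^sub>F t in nhds (0::real). \<bar>t\<bar> < 1"
  by (rule eventually_nhds_metric[THEN iffD2]) (auto intro!: exI[of _ 1] simp: dist_real_def)

lemma bigo_power_mono_nhds0:
  assumes "k \<le> n"
  shows "(\<lambda>h::real. h ^ n) \<in> O[nhds 0](\<lambda>h. h ^ k)"
proof (rule bigoI[where c = 1], rule eventually_mono[OF eventually_nhds0_abs_less_1])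
  show "norm (h ^ n) \<le> 1 * norm (h ^ k)" if "\<bar>h\<bar> < 1" for h :: real
    using that by (simp add: power_abs power_decreasing[OF assms])
qed

lemma bigo_imp_tendsto_zero_nhds0:
  fixes s :: "real \<Rightarrow> real"
  assumes "s \<in> O[nhds 0](\<lambda>h. h)"
  shows "filterlim s (nhds 0) (nhds 0)"
proof -
  obtain c where "\<forall>\<^sub>F h in nhds 0. norm (s h) \<le> c * norm h"
    using assms by (auto elim: landau_o.bigE)
  moreover have "((\<lambda>h. c * norm h) \<longlongrightarrow> 0) (nhds (0::real))"
    using tendsto_mult_right_zero[OF tendsto_norm_zero[OF filterlim_ident]] .
  ultimately show ?thesis
    unfolding filterlim_def[symmetric] by (rule Lim_null_comparison)
qed

lemma quadratic_expansion_compose: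
  fixes \<phi> s :: "real \<Rightarrow> real"
  assumes \<phi>: "(\<lambda>t. \<phi> t - (p0 + p1 * t + p2 * t\<^sup>2)) \<in> O[nhds 0](\<lambda>t. t ^ 3)"
    and s: "(\<lambda>h. s h - (a1 * h + a2 * h\<^sup>2)) \<in> O[nhds 0](\<lambda>h. h ^ 3)"
  shows "(\<lambda>h. \<phi> (s h) - (p0 + p1 * a1 * h + (p1 * a2 + p2 * a1\<^sup>2) * h\<^sup>2)) \<in> O[nhds 0](\<lambda>h. h ^ 3)"
proof -
  have h2: "(\<lambda>h::real. h\<^sup>2) \<in> O[nhds 0](\<lambda>h. h)"
    using bigo_power_mono_nhds0[of 1 2] by simp
  have h3: "(\<lambda>h::real. h ^ 3) \<in> O[nhds 0](\<lambda>h. h\<^sup>2)"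
    using bigo_power_mono_nhds0[of 2 3] by simp
  have s_minus_linear: "(\<lambda>h. s h - a1 * h) \<in> O[nhds 0](\<lambda>h. h\<^sup>2)"
    using sum_in_bigo(1)[OF landau_o.big.trans[OF s h3], of "\<lambda>h. a2 * h\<^sup>2"] by (simp add: algebra_simps)
  have s_linear: "s \<in> O[nhds 0](\<lambda>h. h)"
    using sum_in_bigo(1)[OF landau_o.big.trans[OF s_minus_linear h2], of "\<lambda>h. a1 * h"] by simp
  have "(\<lambda>h. \<phi> (s h) - (p0 + p1 * s h + p2 * (s h)\<^sup>2)) \<in> O[nhds 0](\<lambda>h. s h ^ 3)"
    using landau_o.big.compose[OF \<phi> bigo_imp_tendsto_zero_nhds0[OF s_linear]] .
  also have "(\<lambda>h. s h ^ 3) \<in> O[nhds 0](\<lambda>h. h ^ 3)"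
    by (rule landau_o.big_power[OF s_linear])
  finally have outer: "(\<lambda>h. \<phi> (s h) - (p0 + p1 * s h + p2 * (s h)\<^sup>2)) \<in> O[nhds 0](\<lambda>h. h ^ 3)" .
  have "(\<lambda>h. (s h - a1 * h) * (s h + a1 * h)) \<in> O[nhds 0](\<lambda>h. h\<^sup>2 * h)"
    by (intro landau_o.big.mult s_minus_linear sum_in_bigo s_linear) simp
  then have square: "(\<lambda>h. (s h)\<^sup>2 - a1\<^sup>2 * h\<^sup>2) \<in> O[nhds 0](\<lambda>h. h ^ 3)"
    by (simp add: power2_eq_square power3_eq_cube algebra_simps)
  have "(\<lambda>h. (\<phi> (s h) - (p0 + p1 * s h + p2 * (s h)\<^sup>2)) + p1 * (s h - (a1 * h + a2 * h\<^sup>2))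
      + p2 * ((s h)\<^sup>2 - a1\<^sup>2 * h\<^sup>2)) \<in> O[nhds 0](\<lambda>h. h ^ 3)"
    using sum_in_bigo(1)[OF sum_in_bigo(1)[OF outer]] s square by simp
  then show ?thesis
    by (simp add: algebra_simps)
qed

lemma product_expansion:
  fixes f g :: "real \<Rightarrow> real"
  assumes f: "(\<lambda>h. f h - (a0 + a1 * h + a2 * h\<^sup>2)) \<in> O[nhds 0](\<lambda>h. h ^ 3)"
    and g: "(\<lambda>h. g h - (b0 * h ^ n + b1 * h ^ (n + 1) + b2 * h ^ (n + 2))) \<in> O[nhds 0](\<lambda>h. h ^ (n + 3))"
  shows "(\<lambda>h. f h * g h - (a0 * b0 * h ^ n + (a0 * b1 + a1 * b0) * h ^ (n + 1)
            + (a0 * b2 + a1 * b1 + a2 * b0) * h ^ (n + 2))) \<in> O[nhds 0](\<lambda>h. h ^ (n + 3))"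
proof -
  define A where "A h = a0 + a1 * h + a2 * h\<^sup>2" for h :: real
  define B where "B h = b0 * h ^ n + b1 * h ^ (n + 1) + b2 * h ^ (n + 2)" for h :: real
  have A_bounded: "A \<in> O[nhds 0](\<lambda>_. 1)"
    unfolding A_def using bigo_power_mono_nhds0[of 0 1] bigo_power_mono_nhds0[of 0 2]
    by (intro sum_in_bigo) simp_all
  have B_order: "B \<in> O[nhds 0](\<lambda>h. h ^ n)"
    unfolding B_def using bigo_power_mono_nhds0[of n "n + 1"] bigo_power_mono_nhds0[of n "n + 2"]
    by (intro sum_in_bigo) simp_all
  have g_order: "g \<in> O[nhds 0](\<lambda>h. h ^ n)"
    using sum_in_bigo(1)[OF landau_o.big.trans[OF g[folded B_def] bigo_power_mono_nhds0] B_order]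
    by simp
  have "(\<lambda>h. (f h - A h) * g h) \<in> O[nhds 0](\<lambda>h. h ^ 3 * h ^ n)"
    using landau_o.big.mult[OF f[folded A_def] g_order] .
  then have first: "(\<lambda>h. (f h - A h) * g h) \<in> O[nhds 0](\<lambda>h. h ^ (n + 3))"
    by (simp add: power_add mult.commute)
  have second: "(\<lambda>h. A h * (g h - B h)) \<in> O[nhds 0](\<lambda>h. h ^ (n + 3))"
    using landau_o.big.mult[OF A_bounded g[folded B_def]] by simp
  have third: "(\<lambda>h. (a1 * b2 + a2 * b1) * h ^ (n + 3) + a2 * b2 * h ^ (n + 4)) \<in> O[nhds 0](\<lambda>h. h ^ (n + 3))"
    using bigo_power_mono_nhds0[of "n + 3" "n + 4"] by (intro sum_in_bigo) simp_all
  have "(\<lambda>h. (f h - A h) * g h + A h * (g h - B h)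
      + ((a1 * b2 + a2 * b1) * h ^ (n + 3) + a2 * b2 * h ^ (n + 4))) \<in> O[nhds 0](\<lambda>h. h ^ (n + 3))"
    using sum_in_bigo(1)[OF sum_in_bigo(1)[OF first second] third] .
  then show ?thesis
    by (simp add: A_def B_def power_add power2_eq_square eval_nat_numeral algebra_simps)
qed

lemma odd_expansion_symmetrized_quotient:
  fixes F :: "real \<Rightarrow> real"
  assumes F: "(\<lambda>h. F h - (c0 * h ^ n + c1 * h ^ (n + 1) + c2 * h ^ (n + 2))) \<in> O[nhds 0](\<lambda>h. h ^ (n + 3))"
    and "odd n"
  shows "(\<lambda>h. (F h + F (- h)) / h - 2 * c1 * h ^ n) \<in> O[at_right 0](\<lambda>h. h ^ (n + 2))"
proof -
  define E where "E h = F h - (c0 * h ^ n + c1 * h ^ (n + 1) + c2 * h ^ (n + 2))" for h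
  have "filterlim (\<lambda>h::real. - h) (nhds 0) (nhds 0)"
    using tendsto_minus[OF filterlim_ident[of "nhds (0::real)"]] by simp
  then have "(\<lambda>h. E (- h)) \<in> O[nhds 0](\<lambda>h. (- h) ^ (n + 3))"
    using landau_o.big.compose[OF F[folded E_def]] by blast
  then have "(\<lambda>h. E h + E (- h)) \<in> O[nhds 0](\<lambda>h. h ^ (n + 3))"
    using F[folded E_def] \<open>odd n\<close> by (intro sum_in_bigo) simp_all
  then have quotient: "(\<lambda>h. (E h + E (- h)) * inverse h) \<in> O[at_right 0](\<lambda>h. h ^ (n + 3) * inverse h)"
    by (intro landau_o.big.mult landau_o.big_refl landau_o.big.filter_mono[OF at_within_le_nhds])
  have numerator: "\<forall>\<^sub>F h in at_right 0. (E h + E (- h)) * inverse h = (F h + F (- h)) / h - 2 * c1 * h ^ n"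
    using eventually_at_right_less[of "0::real"] \<open>odd n\<close>
    by (auto elim!: eventually_mono simp: E_def field_simps power_add)
  have denominator: "\<forall>\<^sub>F h in at_right 0. h ^ (n + 3) * inverse h = (h::real) ^ (n + 2)"
    using eventually_at_right_less[of "0::real"]
    by (rule eventually_mono) (simp add: field_simps eval_nat_numeral)
  show ?thesis
    using quotient landau_o.big.cong_ex[OF numerator denominator] by simp
qed

lemma smooth1_DERIV:
  assumes "smooth1 u"
  shows "((deriv ^^ n) u has_real_derivative (deriv ^^ Suc n) u y) (at y)"
  using assms by (simp add: smooth1_def DERIV_deriv_iff_real_differentiable)

definition taylor_poly :: "(real \<Rightarrow> real) \<Rightarrow> real \<Rightarrow> nat \<Rightarrow> real \<Rightarrow> real" where
  "taylor_poly u x N t = (\<Sum>k<N. (deriv ^^ k) u x / fact k * t ^ k)"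

lemma taylor_poly_3: "taylor_poly u x 3 t = u x + deriv u x * t + (deriv ^^ 2) u x / 2 * t\<^sup>2"
  by (simp add: taylor_poly_def eval_nat_numeral fact_Suc)

lemma taylor_remainder_bigo:
  assumes u: "smooth1 u"
  shows "(\<lambda>t. u (x + t) - taylor_poly u x N t) \<in> O[nhds 0](\<lambda>t. t ^ N)"
proof -
  have "continuous_on (cball x 1) ((deriv ^^ N) u)"
    using smooth1_DERIV[OF u] by (meson DERIV_isCont continuous_at_imp_continuous_on)
  then have "bounded ((deriv ^^ N) u ` cball x 1)"
    by (intro compact_imp_bounded compact_continuous_image) auto
  then obtain M where M: "\<And>y. y \<in> cball x 1 \<Longrightarrow> \<bar>(deriv ^^ N) u y\<bar> \<le> M"
    unfolding bounded_iff by (auto simp del: mem_cball)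
  have remainder: "\<bar>u (x + t) - taylor_poly u x N t\<bar> \<le> M / fact N * \<bar>t ^ N\<bar>" if "\<bar>t\<bar> < 1" for t
  proof -
    have "((\<lambda>s. (deriv ^^ m) u (x + s)) has_real_derivative (deriv ^^ Suc m) u (x + s) * 1) (at s)"
      for m s by (rule DERIV_chain2[OF smooth1_DERIV[OF u]]) (auto intro!: derivative_eq_intros)
    then obtain z where z: "\<bar>z\<bar> \<le> \<bar>t\<bar>"
      and eq: "u (x + t) = taylor_poly u x N t + (deriv ^^ N) u (x + z) / fact N * t ^ N"
      using Maclaurin_all_le[of "\<lambda>m s. (deriv ^^ m) u (x + s)" "\<lambda>s. u (x + s)" t N]
      by (auto simp: taylor_poly_def)
    have "\<bar>(deriv ^^ N) u (x + z)\<bar> \<le> M"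
      using z that by (intro M) (simp add: dist_real_def)
    then show ?thesis
      by (simp add: eq abs_mult divide_right_mono mult_right_mono)
  qed
  show ?thesis
    by (rule bigoI[where c = "M / fact N"], rule eventually_mono[OF eventually_nhds0_abs_less_1])
      (unfold real_norm_def, rule remainder)
qed

lemma funpow_deriv_slice: "(deriv ^^ n) (\<lambda>t. f (a, t)) = (\<lambda>t. pds (replicate n False) f (a, t))"
  by (induction n) (simp_all add: pdy_def)

lemma smooth1_slice: "smooth2 f \<Longrightarrow> smooth1 (\<lambda>t. f (a, t))"
  by (simp add: smooth1_def smooth2_def funpow_deriv_slice)

lemma smooth2_partial_DERIV:
  assumes "smooth2 f"
  shows "((\<lambda>s. f (s, b)) has_real_derivative pdx f (a, b)) (at a)"
    and "((\<lambda>t. f (a, t)) has_real_derivative pdy f (a, b)) (at b)"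
  using assms[unfolded smooth2_def, THEN spec[of _ "[]"]]
  by (auto simp: pdx_def pdy_def DERIV_deriv_iff_real_differentiable)

lemma smooth2_has_derivative:
  assumes f: "smooth2 f"
  shows "(f has_derivative (\<lambda>(s, t). pdx f (a, b) * s + pdy f (a, b) * t)) (at (a, b))"
proof -
  have "continuous_on UNIV (pdy f)"
    using f unfolding smooth2_def by (metis pds.simps)
  then have "((\<lambda>(s, t). f (s, t)) has_derivative
      (\<lambda>(s, t). pdx f (a, b) * s + blinfun_mult_left (pdy f (a, b)) t)) (at (a, b) within UNIV \<times> UNIV)"
    using smooth2_partial_DERIV[OF f]
    by (intro has_derivative_partialsI)
      (auto intro!: continuous_intros bounded_linear.continuous[OF bounded_linear_blinfun_mult_left]
        simp: has_field_derivative_def mult_commute_abs continuous_on_eq_continuous_within split_beta')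
  then show ?thesis
    by (simp add: mult.commute)
qed

lemma symmetric_diagonal_DERIV:
  assumes f: "smooth2 f" and sym: "\<And>v w. f (v, w) = f (w, v)"
  shows "((\<lambda>v. f (v, v)) has_real_derivative 2 * pdy f (a, a)) (at a)"
proof -
  have partials_agree: "pdx f (a, a) = pdy f (a, a)"
    by (simp add: pdx_def pdy_def sym[of _ a])
  have "((\<lambda>v. (v, v)) has_derivative (\<lambda>t. (t, t))) (at a)"
    by (auto intro!: derivative_eq_intros)
  from has_derivative_compose[OF this smooth2_has_derivative[OF f, of a a]]
  have "((\<lambda>v. f (v, v)) has_derivative (\<lambda>t. 2 * pdy f (a, a) * t)) (at a)"
    by (simp add: partials_agree algebra_simps)
  then show ?thesis
    by (simp add: has_field_derivative_def)
qed

lemma dissipation_coefficient_expansion: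
  assumes u: "smooth1 u" and f: "smooth2 Dbar"
    and sym: "\<And>v w. Dbar (v, w) = Dbar (w, v)" and diag: "\<And>v. Dbar (v, v) = D v"
  shows "\<exists>c. (\<lambda>h. Dbar (u x, u (x + h)) - (D (u x) + deriv (\<lambda>y. D (u y)) x / 2 * h + c * h\<^sup>2))
           \<in> O[nhds 0](\<lambda>h. h ^ 3)"
proof -
  define a where "a = u x"
  have "((\<lambda>y. D (u y)) has_real_derivative 2 * pdy Dbar (a, a) * deriv u x) (at x)"
    using DERIV_chain2[OF symmetric_diagonal_DERIV[OF f sym] smooth1_DERIV[OF u, of 0]]
    by (simp add: diag a_def)
  then have chain: "deriv (\<lambda>y. D (u y)) x = 2 * pdy Dbar (a, a) * deriv u x"
    by (rule DERIV_imp_deriv)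
  have slice: "(\<lambda>t. Dbar (a, a + t) - (D a + pdy Dbar (a, a) * t + (deriv ^^ 2) (\<lambda>t. Dbar (a, t)) a / 2 * t\<^sup>2))
      \<in> O[nhds 0](\<lambda>t. t ^ 3)"
    using taylor_remainder_bigo[OF smooth1_slice[OF f], of a a 3]
    by (simp add: taylor_poly_3 diag pdy_def)
  have increment: "(\<lambda>h. (u (x + h) - a) - (deriv u x * h + (deriv ^^ 2) u x / 2 * h\<^sup>2)) \<in> O[nhds 0](\<lambda>h. h ^ 3)"
    using taylor_remainder_bigo[OF u, of x 3] by (simp add: taylor_poly_3 a_def algebra_simps)
  show ?thesis
    using quadratic_expansion_compose[OF slice increment]
    by (intro exI[of _ "pdy Dbar (a, a) * (deriv ^^ 2) u x / 2
        + (deriv ^^ 2) (\<lambda>t. Dbar (a, t)) a / 2 * (deriv u x)\<^sup>2"]) (simp add: chain a_def algebra_simps)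
qed

text \<open>The jump \<open>u\<^sub>R - u\<^sub>L\<close> at the face \<open>j + 1/2\<close> with the central differences written out, for
  \<open>v t = u (x\<^sub>j + t)\<close>: the first two terms come from the \<open>\<kappa>\<close>-scheme, the last two from
  \<open>\<kappa>\<^sub>3 (T\<^sub>k - T\<^sub>j)\<close>.\<close>

definition jump_stencil :: "real \<Rightarrow> real \<Rightarrow> (real \<Rightarrow> real) \<Rightarrow> real \<Rightarrow> real" where
  "jump_stencil \<kappa> \<kappa>3 v h =
     (1 - \<kappa>) * (v h - v 0) - (1 - \<kappa>) / 4 * (v (2 * h) - v 0 + v h - v (- h))
     - \<kappa>3 / 16 * (v (3 * h) - 2 * v h + v (- h)) + \<kappa>3 / 16 * (v (2 * h) - 2 * v 0 + v (- 2 * h))"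

lemma jump_right_face:
  assumes "h \<noteq> 0"
  shows "uR \<kappa> \<kappa>3 u x h 0 - uL \<kappa> \<kappa>3 u x h 0 = jump_stencil \<kappa> \<kappa>3 (\<lambda>t. u (x + t)) h"
  using assms
  by (simp add: uR_def uL_def TL_def TR_def ux_def uxx_def nodeval_def jump_stencil_def
      power2_eq_square field_simps)

lemma jump_left_face:
  assumes "h \<noteq> 0"
  shows "uR \<kappa> \<kappa>3 u x h (- 1) - uL \<kappa> \<kappa>3 u x h (- 1) = - jump_stencil \<kappa> \<kappa>3 (\<lambda>t. u (x + t)) (- h)"
  using assms
  by (simp add: uR_def uL_def TL_def TR_def ux_def uxx_def nodeval_def jump_stencil_def
      power2_eq_square field_simps)

lemma Err_eq_symmetrized:
  assumes sym: "\<And>v w. Dbar (v, w) = Dbar (w, v)" and "h \<noteq> 0"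
  shows "Err Dbar \<kappa> \<kappa>3 u x h =
    - (Dbar (u x, u (x + h)) * jump_stencil \<kappa> \<kappa>3 (\<lambda>t. u (x + t)) h
       + Dbar (u x, u (x - h)) * jump_stencil \<kappa> \<kappa>3 (\<lambda>t. u (x + t)) (- h)) / (2 * h)"
  using sym[of "u (x - h)" "u x"]
  by (simp add: Err_def Phi_def jump_right_face[OF \<open>h \<noteq> 0\<close>] jump_left_face[OF \<open>h \<noteq> 0\<close>]
      nodeval_def field_simps)

lemma jump_stencil_bigo:
  assumes "(\<lambda>t. v t - w t) \<in> O[nhds 0](\<lambda>t. t ^ N)"
  shows "(\<lambda>h. jump_stencil \<kappa> \<kappa>3 v h - jump_stencil \<kappa> \<kappa>3 w h) \<in> O[nhds 0](\<lambda>h. h ^ N)"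
proof -
  define r where "r t = v t - w t" for t
  have scaled: "(\<lambda>h. r (c * h)) \<in> O[nhds 0](\<lambda>h. h ^ N)" for c :: real
  proof -
    have "filterlim (\<lambda>h. c * h) (nhds 0) (nhds (0::real))"
      using tendsto_mult_right_zero[OF filterlim_ident] .
    then have "(\<lambda>h. r (c * h)) \<in> O[nhds 0](\<lambda>h. (c * h) ^ N)"
      using landau_o.big.compose[OF assms[folded r_def]] by blast
    also have "(\<lambda>h. (c * h) ^ N) \<in> O[nhds 0](\<lambda>h. h ^ N)"
      by (simp add: power_mult_distrib)
    finally show ?thesis .
  qed
  have "jump_stencil \<kappa> \<kappa>3 v h - jump_stencil \<kappa> \<kappa>3 w h =
      (1 - \<kappa>) * (r (1 * h) - r (0 * h))
      - (1 - \<kappa>) / 4 * (r (2 * h) - r (0 * h) + r (1 * h) - r (- 1 * h))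
      - \<kappa>3 / 16 * (r (3 * h) - 2 * r (1 * h) + r (- 1 * h))
      + \<kappa>3 / 16 * (r (2 * h) - 2 * r (0 * h) + r (- 2 * h))" for h
    by (simp add: jump_stencil_def r_def field_simps)
  then show ?thesis
    by (simp only:) (intro sum_in_bigo cmult_in_bigo_iff[THEN iffD2, OF disjI2] scaled)
qed

lemma jump_stencil_fifth_order:
  assumes "smooth1 u"
  shows "(\<lambda>h. jump_stencil \<kappa> (\<kappa> - 1) (\<lambda>t. u (x + t)) h
      - (- (\<kappa> - 1) / 16 * (deriv ^^ 5) u x * h ^ 5 + - (\<kappa> - 1) / 32 * (deriv ^^ 6) u x * h ^ 6
         + - (\<kappa> - 1) / 48 * (deriv ^^ 7) u x * h ^ 7)) \<in> O[nhds 0](\<lambda>h. h ^ 8)"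
proof -
  have "jump_stencil \<kappa> (\<kappa> - 1) (taylor_poly u x 8) h =
      - (\<kappa> - 1) / 16 * (deriv ^^ 5) u x * h ^ 5 + - (\<kappa> - 1) / 32 * (deriv ^^ 6) u x * h ^ 6
      + - (\<kappa> - 1) / 48 * (deriv ^^ 7) u x * h ^ 7" for h
    by (simp add: jump_stencil_def taylor_poly_def eval_nat_numeral fact_Suc power_mult_distrib
        field_simps del: funpow.simps)
  then show ?thesis
    using jump_stencil_bigo[OF taylor_remainder_bigo[OF assms, of x 8], of \<kappa> "\<kappa> - 1"] by simp
qed

lemma jump_stencil_third_order:
  assumes "smooth1 u"
  shows "(\<lambda>h. jump_stencil \<kappa> 0 (\<lambda>t. u (x + t)) h
      - ((\<kappa> - 1) / 4 * (deriv ^^ 3) u x * h ^ 3 + (\<kappa> - 1) / 8 * (deriv ^^ 4) u x * h ^ 4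
         + (\<kappa> - 1) / 16 * (deriv ^^ 5) u x * h ^ 5)) \<in> O[nhds 0](\<lambda>h. h ^ 6)"
proof -
  have "jump_stencil \<kappa> 0 (taylor_poly u x 6) h =
      (\<kappa> - 1) / 4 * (deriv ^^ 3) u x * h ^ 3 + (\<kappa> - 1) / 8 * (deriv ^^ 4) u x * h ^ 4
      + (\<kappa> - 1) / 16 * (deriv ^^ 5) u x * h ^ 5" for h
    by (simp add: jump_stencil_def taylor_poly_def eval_nat_numeral fact_Suc power_mult_distrib
        field_simps del: funpow.simps)
  then show ?thesis
    using jump_stencil_bigo[OF taylor_remainder_bigo[OF assms, of x 6], of \<kappa> 0] by simp
qed

lemma Err_expansion:
  assumes u: "smooth1 u" and f: "smooth2 Dbar"
    and sym: "\<And>v w. Dbar (v, w) = Dbar (w, v)" and diag: "\<And>v. Dbar (v, v) = D v"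
    and stencil: "(\<lambda>h. jump_stencil \<kappa> \<kappa>3 (\<lambda>t. u (x + t)) h
        - (p * h ^ n + q * h ^ (n + 1) + r * h ^ (n + 2))) \<in> O[nhds 0](\<lambda>h. h ^ (n + 3))"
    and "odd n"
    and C: "C = - (D (u x) * q + deriv (\<lambda>y. D (u y)) x / 2 * p)"
  shows "(\<lambda>h. Err Dbar \<kappa> \<kappa>3 u x h - C * h ^ n) \<in> O[at_right 0](\<lambda>h. h ^ (n + 2))"
proof -
  define F where "F h = Dbar (u x, u (x + h)) * jump_stencil \<kappa> \<kappa>3 (\<lambda>t. u (x + t)) h" for h
  obtain c where "(\<lambda>h. Dbar (u x, u (x + h)) - (D (u x) + deriv (\<lambda>y. D (u y)) x / 2 * h + c * h\<^sup>2))
      \<in> O[nhds 0](\<lambda>h. h ^ 3)"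
    using dissipation_coefficient_expansion[OF u f sym diag] by blast
  from odd_expansion_symmetrized_quotient[OF product_expansion[OF this stencil, folded F_def] \<open>odd n\<close>]
  have expansion: "(\<lambda>h. - 1 / 2 * ((F h + F (- h)) / h - 2 * (D (u x) * q + deriv (\<lambda>y. D (u y)) x / 2 * p) * h ^ n))
      \<in> O[at_right 0](\<lambda>h. h ^ (n + 2))"
    by (rule cmult_in_bigo_iff[THEN iffD2, OF disjI2])
  have "\<forall>\<^sub>F h in at_right 0.
      - 1 / 2 * ((F h + F (- h)) / h - 2 * (D (u x) * q + deriv (\<lambda>y. D (u y)) x / 2 * p) * h ^ n)
      = Err Dbar \<kappa> \<kappa>3 u x h - C * h ^ n"
    using eventually_at_right_less[of "0::real"]
  proof (rule eventually_mono)
    fix h :: real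
    assume "0 < h"
    then have "Err Dbar \<kappa> \<kappa>3 u x h = - (F h + F (- h)) / (2 * h)"
      by (simp add: Err_eq_symmetrized[of Dbar, OF sym] F_def)
    then show "- 1 / 2 * ((F h + F (- h)) / h - 2 * (D (u x) * q + deriv (\<lambda>y. D (u y)) x / 2 * p) * h ^ n)
        = Err Dbar \<kappa> \<kappa>3 u x h - C * h ^ n"
      by (simp add: C algebra_simps add_divide_distrib diff_divide_distrib)
  qed
  from landau_o.big.in_cong[THEN iffD1, OF this expansion] show ?thesis .
qed

theorem mainTheorem1:
  fixes u D :: "real \<Rightarrow> real" and Dbar :: "real \<times> real \<Rightarrow> real"
    and \<kappa> x :: real
  assumes "smooth1 u" and "smooth1 D" and "smooth2 Dbar"
    and "\<And>v w. Dbar (v, w) = Dbar (w, v)"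
    and "\<And>v. Dbar (v, v) = D v"
  shows "(\<lambda>h. Err Dbar \<kappa> (\<kappa> - 1) u x h
            - (\<kappa> - 1) / 32 * (deriv (\<lambda>y. D (u y)) x * (deriv ^^ 5) u x
                               + D (u x) * (deriv ^^ 6) u x) * h ^ 5)
           \<in> O[at_right 0](\<lambda>h. h ^ 7)
       \<and> (\<lambda>h. Err Dbar \<kappa> 0 u x h
            - (- (\<kappa> - 1) / 8) * (deriv (\<lambda>y. D (u y)) x * (deriv ^^ 3) u x
                               + D (u x) * (deriv ^^ 4) u x) * h ^ 3)
           \<in> O[at_right 0](\<lambda>h. h ^ 5)"
proof -
  have "(\<lambda>h. Err Dbar \<kappa> (\<kappa> - 1) u x h
            - (\<kappa> - 1) / 32 * (deriv (\<lambda>y. D (u y)) x * (deriv ^^ 5) u x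
                               + D (u x) * (deriv ^^ 6) u x) * h ^ 5)
           \<in> O[at_right 0](\<lambda>h. h ^ (5 + 2))"
    by (rule Err_expansion[OF assms(1,3,4,5), where p = "- (\<kappa> - 1) / 16 * (deriv ^^ 5) u x"
          and q = "- (\<kappa> - 1) / 32 * (deriv ^^ 6) u x" and r = "- (\<kappa> - 1) / 48 * (deriv ^^ 7) u x"])
      (use jump_stencil_fifth_order[OF assms(1)] in simp, simp, simp add: field_simps)
  moreover have "(\<lambda>h. Err Dbar \<kappa> 0 u x h
            - (- (\<kappa> - 1) / 8) * (deriv (\<lambda>y. D (u y)) x * (deriv ^^ 3) u x
                               + D (u x) * (deriv ^^ 4) u x) * h ^ 3)
           \<in> O[at_right 0](\<lambda>h. h ^ (3 + 2))"
    by (rule Err_expansion[OF assms(1,3,4,5), where p = "(\<kappa> - 1) / 4 * (deriv ^^ 3) u x"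
          and q = "(\<kappa> - 1) / 8 * (deriv ^^ 4) u x" and r = "(\<kappa> - 1) / 16 * (deriv ^^ 5) u x"])
      (use jump_stencil_third_order[OF assms(1)] in simp, simp, simp add: field_simps)
  ultimately show ?thesis
    by simp
qed

end
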